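(* Let $P_1,\dots,P_N\in\mathbb{R}^2$ be fixed regular points and let $T_0$ be a full Steiner topology on them. Let $S$ and $S'$ be two adjacent Steiner points of $T_0$, where the neighbors of $S$ are $\{A,B,S'\}$ and the neighbors of $S'$ are $\{C,D,S\}$ (each of $A,B,C,D$ may be a regular or a Steiner point). Let $T_1$ and $T_2$ be the two other topologies obtained from $T_0$ by reorganizing the neighborhood of $S,S'$: in $T_1$ the neighbors of $S$ are $\{B,C,S'\}$ and those of $S'$ are $\{A,D,S\}$; in $T_2$ the neighbors of $S$ are $\{A,C,S'\}$ and those of $S'$ are $\{B,D,S\}$; all other adjacencies are unchanged. Consider a minimal tree for $T_0$, i.e. a placement of the Steiner points minimizing the total Euclidean edge length among all placements realizing $T_0$ (coincident points allowed), and suppose that in this minimal tree the segments $[AB]$ and $[CD]$ intersect. Then: (1) $S$ and $S'$ have the same coordinates; (2) the length $L_{T_0}$ of the minimal tree for $T_0$ satisfies $L_{T_0}\ge L_{T_i}$ for $i=1,2$, where $L_{T_i}$ is the minimal length of a tree with topology $T_i$; (3) in this minimal tree, $|AS|+|BS|+|CS'|+|DS'|+|SS'| = |AB|+|CD|$.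
   Context: A Steiner tree on $N$ given (regular) points is a tree in the plane whose vertex set consists of the regular points together with additional vertices called Steiner points, each Steiner point having degree exactly 3; its length is the sum of the Euclidean lengths of its edges. The topology of a Steiner tree is its combinatorial structure (which vertices are adjacent). A full topology is one with the maximal number $N-2$ of Steiner points. For a fixed topology, the regular points are fixed and the Steiner point positions are variables in $\mathbb{R}^2$; positions may coincide with each other or with regular points (degenerate trees, with zero-length edges). *)

theory Defs
  imports "HOL-Analysis.Analysis"
begin

datatype vtx = Reg nat | Stn nat

definition vertices :: "nat \<Rightarrow> vtx set" where
  "vertices N = Reg ` {..<N} \<union> Stn ` {..<N - 2}"

text \<open>A topology is a symmetric adjacency relation on the vertices.\<close>
definition neighbors :: "(vtx \<Rightarrow> vtx \<Rightarrow> bool) \<Rightarrow> vtx \<Rightarrow> vtx set" where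
  "neighbors adj v = {w. adj v w}"

definition is_graph_on :: "vtx set \<Rightarrow> (vtx \<Rightarrow> vtx \<Rightarrow> bool) \<Rightarrow> bool" where
  "is_graph_on V adj \<longleftrightarrow> (\<forall>u v. adj u v \<longrightarrow> u \<in> V \<and> v \<in> V \<and> u \<noteq> v \<and> adj v u)"

definition connected_on :: "vtx set \<Rightarrow> (vtx \<Rightarrow> vtx \<Rightarrow> bool) \<Rightarrow> bool" where
  "connected_on V adj \<longleftrightarrow> (\<forall>u\<in>V. \<forall>v\<in>V. adj\<^sup>*\<^sup>* u v)"

definition has_cycle :: "(vtx \<Rightarrow> vtx \<Rightarrow> bool) \<Rightarrow> bool" where
  "has_cycle adj \<longleftrightarrow> (\<exists>cs. length cs \<ge> 3 \<and> distinct cs \<and>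
      (\<forall>i. Suc i < length cs \<longrightarrow> adj (cs ! i) (cs ! Suc i)) \<and> adj (last cs) (hd cs))"

definition is_tree_on :: "vtx set \<Rightarrow> (vtx \<Rightarrow> vtx \<Rightarrow> bool) \<Rightarrow> bool" where
  "is_tree_on V adj \<longleftrightarrow> is_graph_on V adj \<and> connected_on V adj \<and> \<not> has_cycle adj"

definition full_steiner_topology :: "nat \<Rightarrow> (vtx \<Rightarrow> vtx \<Rightarrow> bool) \<Rightarrow> bool" where
  "full_steiner_topology N adj \<longleftrightarrow> is_tree_on (vertices N) adj \<and>
     (\<forall>j < N - 2. card (neighbors adj (Stn j)) = 3)"

fun pos :: "(nat \<Rightarrow> real^2) \<Rightarrow> (nat \<Rightarrow> real^2) \<Rightarrow> vtx \<Rightarrow> real^2" where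
  "pos P s (Reg i) = P i"
| "pos P s (Stn j) = s j"

text \<open>Length of the tree: sum over (unordered) edges of Euclidean lengths;
  each edge appears twice among ordered adjacent pairs.\<close>
definition tree_length :: "(nat \<Rightarrow> real^2) \<Rightarrow> (vtx \<Rightarrow> vtx \<Rightarrow> bool) \<Rightarrow> (nat \<Rightarrow> real^2) \<Rightarrow> real" where
  "tree_length P adj s = (\<Sum>(u,v)\<in>{(u,v). adj u v}. dist (pos P s u) (pos P s v)) / 2"

definition min_length :: "(nat \<Rightarrow> real^2) \<Rightarrow> (vtx \<Rightarrow> vtx \<Rightarrow> bool) \<Rightarrow> real" where
  "min_length P adj = Inf (range (tree_length P adj))"

definition is_minimal_tree :: "(nat \<Rightarrow> real^2) \<Rightarrow> (vtx \<Rightarrow> vtx \<Rightarrow> bool) \<Rightarrow> (nat \<Rightarrow> real^2) \<Rightarrow> bool" where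
  "is_minimal_tree P adj s \<longleftrightarrow> (\<forall>s'. tree_length P adj s \<le> tree_length P adj s')"

end

theory Submission
  imports Defs
begin

text \<open>If the segments AB and CD of a minimal tree meet at a point X, moving both S and S'
  to X is an admissible competitor whose local length is |AB| + |CD|. By the triangle
  inequality through S and through S' the original local length is at least
  |AB| + |CD| + |SS'|, so minimality forces |SS'| = 0 with equality everywhere. Once S and S'
  coincide, the local parts of T0, T1 and T2 are the same sum of four distances to that point,
  while the rest of the three trees is identical.\<close>

definition h_length :: "'a::metric_space \<Rightarrow> 'a \<Rightarrow> 'a \<Rightarrow> 'a \<Rightarrow> 'a \<Rightarrow> 'a \<Rightarrow> real" where
  "h_length a b c d x y = dist a x + dist b x + dist c y + dist d y + dist x y"

lemma h_length_ge: "dist a b + dist c d + dist x y \<le> h_length a b c d x y"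
  using dist_triangle3[of a b x] dist_triangle3[of c d y] unfolding h_length_def
  by (simp add: dist_commute)

lemma h_length_same: "h_length a b c d x x = dist a x + dist b x + dist c x + dist d x"
  by (simp add: h_length_def)

lemma h_length_at_crossing:
  fixes a b c d X :: "'a::euclidean_space"
  assumes "X \<in> closed_segment a b" "X \<in> closed_segment c d"
  shows "h_length a b c d X X = dist a b + dist c d"
proof -
  have "dist a b = dist a X + dist X b"
    using assms(1) by (simp add: between_mem_segment[symmetric] between)
  moreover have "dist c d = dist c X + dist X d"
    using assms(2) by (simp add: between_mem_segment[symmetric] between)
  ultimately show ?thesis unfolding h_length_def by (simp add: dist_commute)
qed

lemma h_length_le_crossing:
  fixes a b c d X x y :: "'a::euclidean_space"
  assumes "X \<in> closed_segment a b" "X \<in> closed_segment c d"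
    and "h_length a b c d x y \<le> h_length a b c d X X"
  shows "x = y \<and> h_length a b c d x y = dist a b + dist c d"
proof -
  have "dist x y \<le> 0" "h_length a b c d x y \<le> dist a b + dist c d"
    using h_length_ge[of a b c d x y] h_length_at_crossing[OF assms(1,2)] assms(3) by linarith+
  then show ?thesis
    using h_length_ge[of a b c d x y] zero_le_dist[of x y] by simp
qed

definition edges_off :: "(vtx \<Rightarrow> vtx \<Rightarrow> bool) \<Rightarrow> vtx set \<Rightarrow> (vtx \<times> vtx) set" where
  "edges_off adj K = {(u,v). adj u v \<and> u \<notin> K \<and> v \<notin> K}"

definition length_off ::
  "(nat \<Rightarrow> real^2) \<Rightarrow> (vtx \<Rightarrow> vtx \<Rightarrow> bool) \<Rightarrow> vtx set \<Rightarrow> (nat \<Rightarrow> real^2) \<Rightarrow> real" where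
  "length_off P adj K s = (\<Sum>(u,v)\<in>edges_off adj K. dist (pos P s u) (pos P s v)) / 2"

lemma edges_off_cong:
  assumes "\<forall>u v. u \<notin> K \<and> v \<notin> K \<longrightarrow> (adj' u v \<longleftrightarrow> adj u v)"
  shows "edges_off adj' K = edges_off adj K"
  using assms unfolding edges_off_def by auto

lemma length_off_cong_pos:
  assumes "\<And>u. u \<notin> K \<Longrightarrow> pos P s' u = pos P s u"
  shows "length_off P adj K s' = length_off P adj K s"
  unfolding length_off_def edges_off_def using assms by (intro arg_cong[where f="\<lambda>x. x / 2"] sum.cong) auto

lemma tree_length_split_off:
  assumes "finite {(u,v). adj u v}"
  shows "tree_length P adj s = length_off P adj K s
    + (\<Sum>(u,v)\<in>{(u,v). adj u v \<and> (u \<in> K \<or> v \<in> K)}. dist (pos P s u) (pos P s v)) / 2"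
proof -
  have split: "{(u,v). adj u v} = edges_off adj K \<union> {(u,v). adj u v \<and> (u \<in> K \<or> v \<in> K)}"
    unfolding edges_off_def by auto
  have "finite (edges_off adj K)" "finite {(u,v). adj u v \<and> (u \<in> K \<or> v \<in> K)}"
    using assms by (auto simp: edges_off_def elim: rev_finite_subset)
  then show ?thesis unfolding tree_length_def length_off_def
    by (subst split, subst sum.union_disjoint) (auto simp: edges_off_def add_divide_distrib)
qed

lemma pos_upd_Stn: "pos P (s(j := x)) v = (if v = Stn j then x else pos P s v)"
  by (cases v) auto

lemma edges_at_edge:
  assumes sym: "symp adj"
    and nbS: "neighbors adj S = {a, b, S'}" and nbS': "neighbors adj S' = {c, d, S}"
  shows "{(u,v). adj u v \<and> (u \<in> {S,S'} \<or> v \<in> {S,S'})} =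
    {(S,a),(S,b),(S,S'),(a,S),(b,S),(S',S),(S',c),(S',d),(c,S'),(d,S')}"
proof -
  have out: "adj S v \<longleftrightarrow> v \<in> {a,b,S'}" "adj S' v \<longleftrightarrow> v \<in> {c,d,S}" for v
    using nbS nbS' unfolding neighbors_def by blast+
  moreover have "adj v S \<longleftrightarrow> v \<in> {a,b,S'}" "adj v S' \<longleftrightarrow> v \<in> {c,d,S}" for v
    using out sympD[OF sym] by blast+
  ultimately have "adj u v \<and> (u \<in> {S,S'} \<or> v \<in> {S,S'}) \<longleftrightarrow>
      (u = S \<and> v \<in> {a,b,S'}) \<or> (v = S \<and> u \<in> {a,b,S'})
      \<or> (u = S' \<and> v \<in> {c,d,S}) \<or> (v = S' \<and> u \<in> {c,d,S})" for u v
    by auto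
  then show ?thesis
    by auto
qed

lemma tree_length_at_edge:
  assumes sym: "symp adj"
    and nbS: "neighbors adj S = {a, b, S'}" and nbS': "neighbors adj S' = {c, d, S}"
    and dist: "distinct [a, b, c, d, S, S']"
    and fin: "finite (edges_off adj {S,S'})"
  shows "tree_length P adj t = length_off P adj {S,S'} t
    + h_length (pos P t a) (pos P t b) (pos P t c) (pos P t d) (pos P t S) (pos P t S')"
proof -
  note at = edges_at_edge[OF sym nbS nbS']
  have "{(u,v). adj u v} = edges_off adj {S,S'} \<union> {(u,v). adj u v \<and> (u \<in> {S,S'} \<or> v \<in> {S,S'})}"
    unfolding edges_off_def by auto
  moreover have "finite {(u,v). adj u v \<and> (u \<in> {S,S'} \<or> v \<in> {S,S'})}"
    by (simp only: at finite_insert finite.emptyI)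
  ultimately have "finite {(u,v). adj u v}"
    using fin by (simp only: finite_Un)
  from tree_length_split_off[OF this, of P t "{S,S'}"] show ?thesis
    unfolding at using dist by (auto simp: h_length_def dist_commute)
qed

lemma tree_length_at_rewired_edge:
  assumes sym: "\<forall>u v. adj' u v \<longleftrightarrow> adj' v u"
    and nbS: "neighbors adj' S = {a, b, S'}" and nbS': "neighbors adj' S' = {c, d, S}"
    and dist: "distinct [a, b, c, d, S, S']"
    and fin: "finite (edges_off adj {S,S'})"
    and rest: "\<forall>u v. u \<notin> {S,S'} \<and> v \<notin> {S,S'} \<longrightarrow> (adj' u v \<longleftrightarrow> adj u v)"
  shows "tree_length P adj' t = length_off P adj {S,S'} t
    + h_length (pos P t a) (pos P t b) (pos P t c) (pos P t d) (pos P t S) (pos P t S')"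
proof -
  have sym': "symp adj'"
    using sym unfolding symp_def by blast
  have "finite (edges_off adj' {S,S'})"
    using fin unfolding edges_off_cong[OF rest] .
  from tree_length_at_edge[OF sym' nbS nbS' dist this] show ?thesis
    unfolding length_off_def edges_off_cong[OF rest] .
qed

lemma minimal_tree_at_edge_le:
  assumes minimal: "is_minimal_tree P adj s"
    and S: "S = Stn j" and S': "S' = Stn j'"
    and split: "\<And>t. tree_length P adj t = length_off P adj {S,S'} t
      + h_length (pos P t a) (pos P t b) (pos P t c) (pos P t d) (pos P t S) (pos P t S')"
    and off: "a \<notin> {S,S'}" "b \<notin> {S,S'}" "c \<notin> {S,S'}" "d \<notin> {S,S'}"
  shows "h_length (pos P s a) (pos P s b) (pos P s c) (pos P s d) (pos P s S) (pos P s S')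
    \<le> h_length (pos P s a) (pos P s b) (pos P s c) (pos P s d) X X"
proof -
  define s' where "s' = s(j := X, j' := X)"
  have same: "pos P s' u = pos P s u" if "u \<notin> {S,S'}" for u
    using that unfolding s'_def S S' by (simp add: pos_upd_Stn)
  have moved: "pos P s' S = X" "pos P s' S' = X"
    unfolding s'_def S S' by (simp_all add: pos_upd_Stn)
  have "length_off P adj {S,S'} s' = length_off P adj {S,S'} s"
    by (rule length_off_cong_pos) (rule same)
  moreover have "tree_length P adj s \<le> tree_length P adj s'"
    using minimal unfolding is_minimal_tree_def by blast
  ultimately show ?thesis
    unfolding split moved using same off by simp
qed

lemma min_length_le_tree_length: "min_length P adj \<le> tree_length P adj s"
proof -
  have "tree_length P adj t \<ge> 0" for t
    unfolding tree_length_def by (intro divide_nonneg_pos sum_nonneg) auto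
  then show ?thesis
    unfolding min_length_def by (intro cInf_lower bdd_belowI) auto
qed

lemma full_steiner_topology_symp: "full_steiner_topology N adj \<Longrightarrow> symp adj"
  unfolding full_steiner_topology_def is_tree_on_def is_graph_on_def symp_def by blast

lemma finite_edges_full_steiner_topology:
  assumes "full_steiner_topology N adj"
  shows "finite {(u,v). adj u v}"
proof (rule finite_subset)
  show "{(u,v). adj u v} \<subseteq> vertices N \<times> vertices N"
    using assms unfolding full_steiner_topology_def is_tree_on_def is_graph_on_def by auto
  show "finite (vertices N \<times> vertices N)"
    unfolding vertices_def by auto
qed

lemma triangle_has_cycle:
  assumes "adj a b" "adj b c" "adj c a" "distinct [a,b,c]"
  shows "has_cycle adj"
  unfolding has_cycle_def
  by (rule exI[of _ "[a,b,c]"]) (use assms in \<open>auto simp: less_Suc_eq nth_Cons'\<close>)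

text \<open>Degree 3 separates each Steiner point's neighbours; acyclicity rules out a common
  neighbour of S and S'.\<close>
lemma full_steiner_topology_distinct_at_edge:
  assumes top: "full_steiner_topology N T"
    and S_stn: "S \<in> Stn ` {..<N - 2}" and S'_stn: "S' \<in> Stn ` {..<N - 2}"
    and adjSS': "T S S'"
    and nbS: "neighbors T S = {A, B, S'}" and nbS': "neighbors T S' = {C, D, S}"
  shows "distinct [A, B, C, D, S, S']"
proof -
  have "card {A,B,S'} = 3" "card {C,D,S} = 3"
    using top S_stn S'_stn nbS nbS' unfolding full_steiner_topology_def by auto
  then have deg: "distinct [A,B,S']" "distinct [C,D,S]"
    by (auto simp: card_insert_if split: if_splits)
  have irrefl: "T u v \<Longrightarrow> u \<noteq> v" for u v
    using top unfolding full_steiner_topology_def is_tree_on_def is_graph_on_def by blast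
  have adjS: "T S v \<longleftrightarrow> v \<in> {A,B,S'}" and adjS': "T S' v \<longleftrightarrow> v \<in> {C,D,S}" for v
    using nbS nbS' unfolding neighbors_def by blast+
  have apart: "X \<noteq> Y" if "X \<in> {A,B}" "Y \<in> {C,D}" for X Y
  proof
    assume "X = Y"
    have "T S X" "T S' X"
      using that \<open>X = Y\<close> adjS adjS' by auto
    then have "T X S" "T S S'" "T S' X" "distinct [X, S, S']"
      using adjSS' irrefl sympD[OF full_steiner_topology_symp[OF top]] by auto
    then have "has_cycle T"
      by (rule triangle_has_cycle)
    with top show False
      unfolding full_steiner_topology_def is_tree_on_def by blast
  qed
  have "A \<noteq> C" "A \<noteq> D" "B \<noteq> C" "B \<noteq> D"
    by (rule apart; simp)+
  moreover have "A \<noteq> S" "B \<noteq> S" "C \<noteq> S'" "D \<noteq> S'" "S \<noteq> S'"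
    using irrefl[of S A] irrefl[of S B] irrefl[of S' C] irrefl[of S' D] irrefl[OF adjSS']
      adjS adjS' by auto
  ultimately show ?thesis
    using deg by simp
qed

theorem mainTheorem1:
  fixes N :: nat and P :: "nat \<Rightarrow> real^2"
    and T0 T1 T2 :: "vtx \<Rightarrow> vtx \<Rightarrow> bool"
    and S S' A B C D :: vtx and s :: "nat \<Rightarrow> real^2"
  assumes inj: "inj_on P {..<N}"
    and top: "full_steiner_topology N T0"
    and S_stn: "S \<in> Stn ` {..<N - 2}" and S'_stn: "S' \<in> Stn ` {..<N - 2}"
    and adjSS': "T0 S S'"
    and nbS: "neighbors T0 S = {A, B, S'}"
    and nbS': "neighbors T0 S' = {C, D, S}"
    and T1_sym: "\<forall>u v. T1 u v \<longleftrightarrow> T1 v u"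
    and T1_S: "neighbors T1 S = {B, C, S'}"
    and T1_S': "neighbors T1 S' = {A, D, S}"
    and T1_rest: "\<forall>u v. u \<notin> {S, S'} \<and> v \<notin> {S, S'} \<longrightarrow> (T1 u v \<longleftrightarrow> T0 u v)"
    and T2_sym: "\<forall>u v. T2 u v \<longleftrightarrow> T2 v u"
    and T2_S: "neighbors T2 S = {A, C, S'}"
    and T2_S': "neighbors T2 S' = {B, D, S}"
    and T2_rest: "\<forall>u v. u \<notin> {S, S'} \<and> v \<notin> {S, S'} \<longrightarrow> (T2 u v \<longleftrightarrow> T0 u v)"
    and minimal: "is_minimal_tree P T0 s"
    and cross: "closed_segment (pos P s A) (pos P s B) \<inter> closed_segment (pos P s C) (pos P s D) \<noteq> {}"
  shows "pos P s S = pos P s S'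
    \<and> tree_length P T0 s \<ge> min_length P T1
    \<and> tree_length P T0 s \<ge> min_length P T2
    \<and> dist (pos P s A) (pos P s S) + dist (pos P s B) (pos P s S)
      + dist (pos P s C) (pos P s S') + dist (pos P s D) (pos P s S')
      + dist (pos P s S) (pos P s S')
      = dist (pos P s A) (pos P s B) + dist (pos P s C) (pos P s D)"
proof -
  have distinct: "distinct [A, B, C, D, S, S']"
    using full_steiner_topology_distinct_at_edge[OF top S_stn S'_stn adjSS' nbS nbS'] .
  have fin: "finite (edges_off T0 {S,S'})"
    by (rule finite_subset[OF _ finite_edges_full_steiner_topology[OF top]]) (auto simp: edges_off_def)
  note split0 = tree_length_at_edge[OF full_steiner_topology_symp[OF top] nbS nbS' distinct fin]
  have "distinct [B, C, A, D, S, S']" "distinct [A, C, B, D, S, S']"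
    using distinct by auto
  note split1 = tree_length_at_rewired_edge[OF T1_sym T1_S T1_S' this(1) fin T1_rest]
   and split2 = tree_length_at_rewired_edge[OF T2_sym T2_S T2_S' this(2) fin T2_rest]
  obtain X where X: "X \<in> closed_segment (pos P s A) (pos P s B)" "X \<in> closed_segment (pos P s C) (pos P s D)"
    using cross by blast
  obtain j j' where "S = Stn j" "S' = Stn j'"
    using S_stn S'_stn by blast
  have "h_length (pos P s A) (pos P s B) (pos P s C) (pos P s D) (pos P s S) (pos P s S')
      \<le> h_length (pos P s A) (pos P s B) (pos P s C) (pos P s D) X X"
    by (rule minimal_tree_at_edge_le[OF minimal \<open>S = Stn j\<close> \<open>S' = Stn j'\<close> split0])
      (use distinct in auto)
  from h_length_le_crossing[OF X this]
  have coincide: "pos P s S = pos P s S'" and local: "h_length (pos P s A) (pos P s B)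
      (pos P s C) (pos P s D) (pos P s S) (pos P s S') = dist (pos P s A) (pos P s B) + dist (pos P s C) (pos P s D)"
    by blast+
  have "tree_length P T1 s = tree_length P T0 s"
    unfolding split0 split1 coincide h_length_same by linarith
  moreover have "tree_length P T2 s = tree_length P T0 s"
    unfolding split0 split2 coincide h_length_same by linarith
  ultimately show ?thesis
    using local min_length_le_tree_length[of P T1 s] min_length_le_tree_length[of P T2 s]
    unfolding h_length_def by (intro conjI coincide) linarith+
qed

end
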